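(* In any execution of Algorithm $\mathsf{AG}$ (described in the context) with a guild, if a process in the maximal guild sends a $\mathrm{Confirm}$ message, then there exists a process in the maximal guild that has received $\mathrm{Ready}$ messages from all members of at least one of its quorums.
   Context: System model: a finite set $\mathcal{P}=\{p_1,\dots,p_n\}$ of processes communicating asynchronously over authenticated point-to-point links; every message sent from a correct process to a correct process is eventually delivered. A process that follows its protocol is correct; others (faulty, Byzantine) may behave arbitrarily. $F\subseteq\mathcal{P}$ denotes the (unknown) set of faulty processes of an execution. For $\mathcal{A}\subseteq 2^{\mathcal{P}}$, write $\mathcal{A}^*=\{A' : A'\subseteq A,\ A\in\mathcal{A}\}$. An asymmetric fail-prone system is an array $\mathbb{F}=[\mathcal{F}_1,\dots,\mathcal{F}_n]$ with $\mathcal{F}_i\subseteq 2^{\mathcal{P}}$. An asymmetric Byzantine quorum system for $\mathbb{F}$ is an array $\mathbb{Q}=[\mathcal{Q}_1,\dots,\mathcal{Q}_n]$ with $\mathcal{Q}_i\subseteq 2^{\mathcal{P}}$ (quorums for $p_i$) satisfying: (consistency) for all $i,j$, all $Q_i\in\mathcal{Q}_i$, $Q_j\in\mathcal{Q}_j$, $F_{ij}\in\mathcal{F}_i^*\cap\mathcal{F}_j^*$: $Q_i\cap Q_j\not\subseteq F_{ij}$; (availability) for all $i$ and $F_i\in\mathcal{F}_i$ there is $Q_i\in\mathcal{Q}_i$ with $F_i\cap Q_i=\emptyset$. A kernel for $p_i$ is a set $K\subseteq\mathcal{P}$ intersecting every $Q\in\mathcal{Q}_i$; $\mathcal{K}_i$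 is the set of kernels for $p_i$. A correct process $p_i$ is wise if $F\in\mathcal{F}_i^*$. A guild is a set $\mathcal{G}$ of wise processes such that every $p_i\in\mathcal{G}$ has some $Q_i\in\mathcal{Q}_i$ with $Q_i\subseteq\mathcal{G}$. An execution with a guild is one in which a nonempty guild exists; the maximal guild $\mathcal{G}_{max}$ is the union of all guilds. Asymmetric reliable broadcast (arb-broadcast / arb-deliver) guarantees, in every execution with a guild: if a correct process arb-broadcasts $m$, every process of $\mathcal{G}_{max}$ eventually arb-delivers $m$; for each sender, all processes of $\mathcal{G}_{max}$ that arb-deliver from it deliver the same message; if some process of $\mathcal{G}_{max}$ arb-delivers a message from a sender, all processes of $\mathcal{G}_{max}$ eventually arb-deliver a message from that sender; a correct process arb-delivers at most one message per sender, and from a correct sender only a message it arb-broadcast. Algorithm $\mathsf{AG}$ (code of $p_i$; each correct process invokes ag-propose$(x_i)$ exactly once; each guarded "upon there being ..." action executes at most once, message handlers once per message). State: sets $S_i,T_i,U_i$ initially empty, boolean $sentT$ initially false. (1) Upon ag-propose$(x_i)$: arb-broadcast $(p_i,x_i)$. (2) Upon arb-delivering $(p_j,x_j)$ from $p_j$: $S_i\gets S_i\cup\{(p_j,x_j)\}$. (3) Upon there being $Q\in\mathcal{Q}_i$ such that for every $p_j\in Q$ some pair $(p_j,\cdot)\in S_i$: send $\langle\mathrm{DistributeS},p_i,S_i\rangle$ to all. (4) For a received $\langle\mathrm{DistributeS},p_j,S_j\rangle$: once $S_j\subseteq S_i$, provided $sentT$ is false at that moment, set $T_i\gets T_i\cup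 S_j$ and send $\langle\mathrm{Ack},p_i\rangle$ to $p_j$. (5) Upon Ack received from every member of some $Q\in\mathcal{Q}_i$: send Ready to all. (6) Upon Ready received from every member of some $Q\in\mathcal{Q}_i$: send Confirm to all. (7) Upon Confirm received from every member of some $K\in\mathcal{K}_i$: send Confirm to all. (8) Upon Confirm received from every member of some $Q\in\mathcal{Q}_i$: send $\langle\mathrm{DistributeT},p_i,T_i\rangle$ to all and set $sentT\gets$ true. (9) For a received $\langle\mathrm{DistributeT},p_j,T_j\rangle$ from $p_j$: once $T_j\subseteq S_i$, set $U_i\gets U_i\cup T_j$. (10) Upon DistributeT received from every member of some $Q\in\mathcal{Q}_i$: ag-deliver$(U_i)$. *)

theory Defs
  imports Main
begin

definition star :: "'p set set \<Rightarrow> 'p set set" where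
  "star A = {A'. \<exists>X\<in>A. A' \<subseteq> X}"

definition asym_quorum_system :: "('p \<Rightarrow> 'p set set) \<Rightarrow> ('p \<Rightarrow> 'p set set) \<Rightarrow> bool" where
  "asym_quorum_system Fs Qs \<longleftrightarrow>
     (\<forall>i j. \<forall>Qi\<in>Qs i. \<forall>Qj\<in>Qs j. \<forall>Fij\<in>star (Fs i) \<inter> star (Fs j). \<not> (Qi \<inter> Qj \<subseteq> Fij))
   \<and> (\<forall>i. \<forall>Fi\<in>Fs i. \<exists>Qi\<in>Qs i. Fi \<inter> Qi = {})"

definition kernels :: "'p set set \<Rightarrow> 'p set set" where
  "kernels Q = {K. \<forall>X\<in>Q. K \<inter> X \<noteq> {}}"

text \<open>F is the set of faulty processes of the execution.\<close>
definition wise :: "('p \<Rightarrow> 'p set set) \<Rightarrow> 'p set \<Rightarrow> 'p \<Rightarrow> bool" where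
  "wise Fs F i \<longleftrightarrow> i \<notin> F \<and> F \<in> star (Fs i)"

definition guild :: "('p \<Rightarrow> 'p set set) \<Rightarrow> ('p \<Rightarrow> 'p set set) \<Rightarrow> 'p set \<Rightarrow> 'p set \<Rightarrow> bool" where
  "guild Fs Qs F G \<longleftrightarrow> (\<forall>i\<in>G. wise Fs F i \<and> (\<exists>Q\<in>Qs i. Q \<subseteq> G))"

definition max_guild :: "('p \<Rightarrow> 'p set set) \<Rightarrow> ('p \<Rightarrow> 'p set set) \<Rightarrow> 'p set \<Rightarrow> 'p set" where
  "max_guild Fs Qs F = \<Union>{G. guild Fs Qs F G}"

text \<open>Point-to-point messages. The process identifier carried by DistributeS, Ack and
  DistributeT in the paper is the (authenticated) link sender, recorded with each message.\<close>
datatype ('p, 'v) msg =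
    DistributeS "('p \<times> 'v) set"
  | Ack
  | Ready
  | Confirm
  | DistributeT "('p \<times> 'v) set"

record ('p, 'v) lstate =
  proposal :: "'v option"                 \<comment> \<open>ag-propose invoked with this value\<close>
  abcast :: "'v option"                   \<comment> \<open>value x with (p_i,x) arb-broadcast\<close>
  adel :: "'p \<Rightarrow> 'v option"             \<comment> \<open>value arb-delivered from each sender\<close>
  setS :: "('p \<times> 'v) set"
  setT :: "('p \<times> 'v) set"
  setU :: "('p \<times> 'v) set"
  sentT :: bool
  rcvd :: "('p \<times> ('p, 'v) msg) set"    \<comment> \<open>received messages (sender, message)\<close>
  doneS :: bool                           \<comment> \<open>action (3) executed\<close>
  doneReady :: bool                       \<comment> \<open>action (5) executed\<close>
  doneC6 :: bool                          \<comment> \<open>action (6) executed\<close>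
  doneC7 :: bool                          \<comment> \<open>action (7) executed\<close>
  handledS :: "('p \<times> ('p, 'v) msg) set"
  handledT :: "('p \<times> ('p, 'v) msg) set"
  agdel :: "('p \<times> 'v) set option"

definition init_lstate :: "('p, 'v) lstate" where
  "init_lstate = \<lparr> proposal = None, abcast = None, adel = (\<lambda>_. None),
     setS = {}, setT = {}, setU = {}, sentT = False, rcvd = {},
     doneS = False, doneReady = False, doneC6 = False, doneC7 = False,
     handledS = {}, handledT = {}, agdel = None \<rparr>"

definition to_all :: "('p, 'v) msg \<Rightarrow> ('p \<times> ('p, 'v) msg) set" where
  "to_all m = range (\<lambda>q. (q, m))"

text \<open>Local step of a correct process p: given the messages addressed to p so far (inbox),
  state ls becomes ls' and the set out of (destination, message) pairs is sent.\<close>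
inductive lstep :: "('p \<Rightarrow> 'p set set) \<Rightarrow> 'p \<Rightarrow> ('p \<times> ('p, 'v) msg) set
    \<Rightarrow> ('p, 'v) lstate \<Rightarrow> ('p, 'v) lstate \<Rightarrow> ('p \<times> ('p, 'v) msg) set \<Rightarrow> bool"
  for Qs :: "'p \<Rightarrow> 'p set set" and p :: 'p and inbox :: "('p \<times> ('p, 'v) msg) set" where
  propose: "proposal ls = None \<Longrightarrow>
     lstep Qs p inbox ls (ls\<lparr>proposal := Some x, abcast := Some x\<rparr>) {}"
| receive: "(q, m) \<in> inbox \<Longrightarrow> (q, m) \<notin> rcvd ls \<Longrightarrow>
     lstep Qs p inbox ls (ls\<lparr>rcvd := insert (q, m) (rcvd ls)\<rparr>) {}"
| distS: "\<not> doneS ls \<Longrightarrow> Q \<in> Qs p \<Longrightarrow> (\<forall>j\<in>Q. \<exists>x. (j, x) \<in> setS ls) \<Longrightarrow>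
     lstep Qs p inbox ls (ls\<lparr>doneS := True\<rparr>) (to_all (DistributeS (setS ls)))"
| handleS: "(q, DistributeS X) \<in> rcvd ls \<Longrightarrow> (q, DistributeS X) \<notin> handledS ls \<Longrightarrow>
     X \<subseteq> setS ls \<Longrightarrow>
     lstep Qs p inbox ls
       (if sentT ls then ls\<lparr>handledS := insert (q, DistributeS X) (handledS ls)\<rparr>
        else ls\<lparr>setT := setT ls \<union> X, handledS := insert (q, DistributeS X) (handledS ls)\<rparr>)
       (if sentT ls then {} else {(q, Ack)})"
| ready: "\<not> doneReady ls \<Longrightarrow> Q \<in> Qs p \<Longrightarrow> (\<forall>j\<in>Q. (j, Ack) \<in> rcvd ls) \<Longrightarrow>
     lstep Qs p inbox ls (ls\<lparr>doneReady := True\<rparr>) (to_all Ready)"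
| confirm6: "\<not> doneC6 ls \<Longrightarrow> Q \<in> Qs p \<Longrightarrow> (\<forall>j\<in>Q. (j, Ready) \<in> rcvd ls) \<Longrightarrow>
     lstep Qs p inbox ls (ls\<lparr>doneC6 := True\<rparr>) (to_all Confirm)"
| confirm7: "\<not> doneC7 ls \<Longrightarrow> K \<in> kernels (Qs p) \<Longrightarrow> (\<forall>j\<in>K. (j, Confirm) \<in> rcvd ls) \<Longrightarrow>
     lstep Qs p inbox ls (ls\<lparr>doneC7 := True\<rparr>) (to_all Confirm)"
| distT: "\<not> sentT ls \<Longrightarrow> Q \<in> Qs p \<Longrightarrow> (\<forall>j\<in>Q. (j, Confirm) \<in> rcvd ls) \<Longrightarrow>
     lstep Qs p inbox ls (ls\<lparr>sentT := True\<rparr>) (to_all (DistributeT (setT ls)))"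
| handleT: "(q, DistributeT X) \<in> rcvd ls \<Longrightarrow> (q, DistributeT X) \<notin> handledT ls \<Longrightarrow>
     X \<subseteq> setS ls \<Longrightarrow>
     lstep Qs p inbox ls
       (ls\<lparr>setU := setU ls \<union> X, handledT := insert (q, DistributeT X) (handledT ls)\<rparr>) {}"
| deliver: "agdel ls = None \<Longrightarrow> Q \<in> Qs p \<Longrightarrow> (\<forall>j\<in>Q. \<exists>X. (j, DistributeT X) \<in> rcvd ls) \<Longrightarrow>
     lstep Qs p inbox ls (ls\<lparr>agdel := Some (setU ls)\<rparr>) {}"

text \<open>Global configuration: local states and all messages sent so far (source, destination, message).\<close>
record ('p, 'v) config =
  lst :: "'p \<Rightarrow> ('p, 'v) lstate"
  sent :: "('p \<times> 'p \<times> ('p, 'v) msg) set"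

definition init_config :: "('p, 'v) config" where
  "init_config = \<lparr> lst = (\<lambda>_. init_lstate), sent = {} \<rparr>"

inductive gstep :: "('p \<Rightarrow> 'p set set) \<Rightarrow> 'p set \<Rightarrow> ('p, 'v) config \<Rightarrow> ('p, 'v) config \<Rightarrow> bool"
  for Qs :: "'p \<Rightarrow> 'p set set" and F :: "'p set" where
  correct_step: "p \<notin> F \<Longrightarrow> lstep Qs p {(q, m). (q, p, m) \<in> sent c} (lst c p) ls' out \<Longrightarrow>
     gstep Qs F c \<lparr> lst = (lst c)(p := ls'), sent = sent c \<union> {(p, q, m) | q m. (q, m) \<in> out} \<rparr>"
| arb_deliver: "p \<notin> F \<Longrightarrow> adel (lst c p) q = None \<Longrightarrow>
     (q \<notin> F \<longrightarrow> abcast (lst c q) = Some x) \<Longrightarrow>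
     gstep Qs F c \<lparr> lst = (lst c)(p := (lst c p)\<lparr>adel := (adel (lst c p))(q := Some x),
                                             setS := insert (q, x) (setS (lst c p))\<rparr>),
                   sent = sent c \<rparr>"
| byz_send: "p \<in> F \<Longrightarrow> gstep Qs F c (c\<lparr>sent := insert (p, q, m) (sent c)\<rparr>)"

text \<open>Asymmetric reliable broadcast properties guaranteed to processes of the maximal guild.\<close>
definition arb_spec :: "('p \<Rightarrow> 'p set set) \<Rightarrow> ('p \<Rightarrow> 'p set set) \<Rightarrow> 'p set
    \<Rightarrow> (nat \<Rightarrow> ('p, 'v) config) \<Rightarrow> bool" where
  "arb_spec Fs Qs F c \<longleftrightarrow>
     (let G = max_guild Fs Qs F in
      (\<forall>s x n. s \<notin> F \<longrightarrow> abcast (lst (c n) s) = Some x \<longrightarrow>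
          (\<forall>q\<in>G. \<exists>n'. adel (lst (c n') q) s = Some x))
    \<and> (\<forall>s q r x y n n'. q \<in> G \<longrightarrow> r \<in> G \<longrightarrow> adel (lst (c n) q) s = Some x \<longrightarrow>
          adel (lst (c n') r) s = Some y \<longrightarrow> x = y)
    \<and> (\<forall>s q n. q \<in> G \<longrightarrow> adel (lst (c n) q) s \<noteq> None \<longrightarrow>
          (\<forall>r\<in>G. \<exists>n'. adel (lst (c n') r) s \<noteq> None)))"

definition AG_execution :: "('p \<Rightarrow> 'p set set) \<Rightarrow> ('p \<Rightarrow> 'p set set) \<Rightarrow> 'p set
    \<Rightarrow> (nat \<Rightarrow> ('p, 'v) config) \<Rightarrow> bool" where
  "AG_execution Fs Qs F c \<longleftrightarrow>
     c 0 = init_config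
   \<and> (\<forall>n. gstep Qs F (c n) (c (Suc n)) \<or> c (Suc n) = c n)
   \<and> (\<forall>p q m n. p \<notin> F \<longrightarrow> q \<notin> F \<longrightarrow> (p, q, m) \<in> sent (c n) \<longrightarrow>
        (\<exists>n'. (p, m) \<in> rcvd (lst (c n') q)))
   \<and> (\<forall>p. p \<notin> F \<longrightarrow> (\<exists>n. proposal (lst (c n) p) \<noteq> None))
   \<and> arb_spec Fs Qs F c"

end

theory Submission
  imports Defs
begin

(* Consider the first moment at which some member p of the maximal guild sends Confirm.
   Action (7) cannot have triggered it: p's kernel meets one of p's quorums lying inside the
   guild, and a Confirm that p received from a guild member would have been sent earlier.
   Hence it was action (6), whose guard is a quorum of Ready messages received by p. *)

definition is_run :: "('p \<Rightarrow> 'p set set) \<Rightarrow> 'p set \<Rightarrow> (nat \<Rightarrow> ('p, 'v) config) \<Rightarrow> bool" where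
  "is_run Qs F c \<longleftrightarrow> c 0 = init_config \<and> (\<forall>n. gstep Qs F (c n) (c (Suc n)) \<or> c (Suc n) = c n)"

definition received_were_sent :: "'p set \<Rightarrow> ('p, 'v) config \<Rightarrow> bool" where
  "received_were_sent F c \<longleftrightarrow>
     (\<forall>p j m. p \<notin> F \<longrightarrow> (j, m) \<in> rcvd (lst c p) \<longrightarrow> (j, p, m) \<in> sent c)"

lemma AG_execution_is_run: "AG_execution Fs Qs F c \<Longrightarrow> is_run Qs F c"
  by (simp add: AG_execution_def is_run_def)

lemma guild_max_guild: "guild Fs Qs F (max_guild Fs Qs F)"
  unfolding guild_def max_guild_def by blast

lemma kernels_inter_quorum: "K \<in> kernels Qs \<Longrightarrow> Q \<in> Qs \<Longrightarrow> \<exists>j. j \<in> K \<and> j \<in> Q"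
  by (auto simp: kernels_def)

lemma lstep_rcvd_subset: "lstep Qs p inbox ls ls' out \<Longrightarrow> rcvd ls' \<subseteq> rcvd ls \<union> inbox"
  by (induction rule: lstep.induct) auto

lemma lstep_Confirm_guard:
  assumes "lstep Qs p inbox ls ls' out" and "(q, Confirm) \<in> out"
  obtains (ready) Q where "Q \<in> Qs p" and "\<forall>j\<in>Q. (j, Ready) \<in> rcvd ls"
    | (kernel) K where "K \<in> kernels (Qs p)" and "\<forall>j\<in>K. (j, Confirm) \<in> rcvd ls"
  using assms by (cases rule: lstep.cases) (auto simp: to_all_def split: if_splits)

lemma gstep_new_sent_by_correct:
  assumes "gstep Qs F c c'" and "p \<notin> F"
    and "(p, q, m) \<in> sent c'" and "(p, q, m) \<notin> sent c"
  obtains ls' out where "lstep Qs p {(j, m'). (j, p, m') \<in> sent c} (lst c p) ls' out"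
    and "(q, m) \<in> out"
  using assms by (cases rule: gstep.cases) auto

lemma received_were_sent_init: "received_were_sent F init_config"
  by (simp add: received_were_sent_def init_config_def init_lstate_def)

lemma gstep_received_were_sent:
  assumes "gstep Qs F c c'" and inv: "received_were_sent F c"
  shows "received_were_sent F c'"
  using assms(1)
proof (cases rule: gstep.cases)
  case (correct_step p ls' out)
  have "(j, r, m) \<in> sent c" if "r \<notin> F" "(j, m) \<in> rcvd (lst c' r)" for r j m
  proof (cases "r = p")
    case True
    then have "(j, m) \<in> rcvd (lst c p) \<or> (j, p, m) \<in> sent c"
      using that(2) lstep_rcvd_subset[OF correct_step(3)] correct_step(1) by auto
    then show ?thesis using inv that(1) True unfolding received_were_sent_def by blast
  next
    case False
    then show ?thesis using inv that correct_step(1) unfolding received_were_sent_def by simp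
  qed
  then show ?thesis using correct_step(1) unfolding received_were_sent_def by auto
qed (use inv in \<open>auto simp: received_were_sent_def\<close>)

lemma is_run_received_were_sent:
  assumes "is_run Qs F c"
  shows "received_were_sent F (c n)"
proof (induction n)
  case 0
  then show ?case using assms received_were_sent_init by (simp add: is_run_def)
next
  case (Suc n)
  from assms have "gstep Qs F (c n) (c (Suc n)) \<or> c (Suc n) = c n" by (simp add: is_run_def)
  with Suc show ?case using gstep_received_were_sent by metis
qed

lemma is_run_Confirm_imp_Ready_quorum:
  assumes run: "is_run Qs F c"
    and correct: "G \<inter> F = {}" and closed: "\<And>r. r \<in> G \<Longrightarrow> \<exists>Q\<in>Qs r. Q \<subseteq> G"
    and "p \<in> G" and "(p, q, Confirm) \<in> sent (c n)"
  shows "\<exists>r\<in>G. \<exists>Q\<in>Qs r. \<exists>n'. \<forall>j\<in>Q. (j, Ready) \<in> rcvd (lst (c n') r)"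
proof -
  let ?confirmed = "\<lambda>n. \<exists>p\<in>G. \<exists>q. (p, q, Confirm) \<in> sent (c n)"
  obtain n0 where "?confirmed n0" and first: "\<And>m. m < n0 \<Longrightarrow> \<not> ?confirmed m"
    using assms(4,5) exists_least_iff[of ?confirmed] by blast
  then obtain p q where p: "p \<in> G" "p \<notin> F" and new: "(p, q, Confirm) \<in> sent (c n0)"
    using correct by blast
  obtain m where n0: "n0 = Suc m"
    using run new by (cases n0) (auto simp: is_run_def init_config_def)
  have old: "(p, q, Confirm) \<notin> sent (c m)" using first[of m] p n0 by blast
  moreover have "gstep Qs F (c m) (c (Suc m)) \<or> c (Suc m) = c m"
    using run by (simp add: is_run_def)
  ultimately have "gstep Qs F (c m) (c n0)" using new n0 by auto
  then obtain ls' out where "lstep Qs p {(j, m'). (j, p, m') \<in> sent (c m)} (lst (c m) p) ls' out"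
    and "(q, Confirm) \<in> out"
    using p(2) new old by (rule gstep_new_sent_by_correct)
  then show ?thesis
  proof (cases rule: lstep_Confirm_guard)
    case (ready Q)
    then show ?thesis using p(1) by blast
  next
    case (kernel K)
    obtain Q where Q: "Q \<in> Qs p" "Q \<subseteq> G" using closed p(1) by blast
    obtain j where "j \<in> K" "j \<in> Q" using kernels_inter_quorum[OF kernel(1) Q(1)] by blast
    then have "j \<in> G" and "(j, p, Confirm) \<in> sent (c m)"
      using Q(2) kernel(2) is_run_received_were_sent[OF run, of m] p(2)
      unfolding received_were_sent_def by blast+
    with first[of m] n0 show ?thesis by blast
  qed
qed

theorem lemma3p4:
  fixes Fs Qs :: "'p::finite \<Rightarrow> 'p set set" and F :: "'p set"
    and c :: "nat \<Rightarrow> ('p, 'v) config"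
  assumes "asym_quorum_system Fs Qs"
    and "AG_execution Fs Qs F c"
    and "\<exists>G. G \<noteq> {} \<and> guild Fs Qs F G"
    and "p \<in> max_guild Fs Qs F"
    and "(p, q, Confirm) \<in> sent (c n)"
  shows "\<exists>r\<in>max_guild Fs Qs F. \<exists>Q\<in>Qs r. \<exists>n'. \<forall>j\<in>Q. (j, Ready) \<in> rcvd (lst (c n') r)"
proof (rule is_run_Confirm_imp_Ready_quorum)
  show "is_run Qs F c" using assms(2) by (rule AG_execution_is_run)
  show "max_guild Fs Qs F \<inter> F = {}"
    using guild_max_guild[of Fs Qs F] by (auto simp: guild_def wise_def)
  show "\<exists>Q\<in>Qs r. Q \<subseteq> max_guild Fs Qs F" if "r \<in> max_guild Fs Qs F" for r
    using guild_max_guild[of Fs Qs F] that by (auto simp: guild_def)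
qed (use assms(4,5) in auto)

end
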